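(* Let $P$ and $P'$ be paths in $T$ such that $P$ is a subpath of $P'$ (i.e. the vertex set of $P$ is contained in that of $P'$). Then (1) $\overline{T}_1(P')\le\overline{T}_1(P)$ and $\overline{T}_2(P)\le\overline{T}_2(P')$; (2) $\overline{S}(P)\le\overline{S}(P')$ and $\overline{S}^2(P)\le\overline{S}^2(P')$; (3) $\overline{Q}(P)\le\overline{Q}(P')$ (in $[0,+\infty]$).
   Context: Let $T=(V,E)$ be a finite tree with vertex set $V=\{v_1,\dots,v_n\}$ and positive edge lengths; $d(x,y)$ denotes the length of the unique path in $T$ between vertices $x,y$. Each vertex $v_i$ has a demand rate $\lambda_i\ge 0$, with $\lambda=\sum_i\lambda_i>0$, and weight $w_i=\lambda_i/\lambda$; $w(T)=\sum_i w_i=1$. A path $P$ is the vertex sequence $p(1),\dots,p(k)$ of a simple path in $T$ (a single vertex is allowed); $|P|=d(p(1),p(k))$, and $d(P,v)=\min_j d(p(j),v)$. For $v\in V$, $p_P(v)$ denotes the unique vertex of $P$ closest to $v$. For a vertex $p$ of $P$, the branch $T_p$ (with respect to $P$) is the set of vertices $v$ with $p_P(v)=p$, and $w_{T_p}=\sum_{v_i\in T_p}w_i$. For a vertex $p$ of $P$ put $\overline{d}_P(p)=\sum_{j=1}^k w_{T_{p(j)}}\,d(p(j),p)$. Fix a speed $v_t>0$, constants $G_i\ge 0$ ($i=1,\dots,n$) and a constant $\overline{G}\ge 0$. Define $\overline{T}_1(P)=\frac{1}{v_t}\sum_i w_i\,d(P,v_i)$, $\overline{T}_2(P)=\frac{1}{v_t}\sum_i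 w_i\,\overline{d}_P(p_P(v_i))$, $\overline{S}(P)=\overline{T}_2(P)+\overline{G}$, $s_i(P)=\frac{1}{v_t}\bigl(\overline{d}_P(p_P(v_i))+G_i\bigr)$, $\overline{S}^2(P)=\sum_i w_i\,s_i(P)^2$, and $\overline{Q}(P)=\dfrac{\lambda\,\overline{S}^2(P)}{2(1-\lambda\overline{S}(P))}$ if $\lambda\overline{S}(P)<1$, $\overline{Q}(P)=+\infty$ otherwise. *)

theory Defs
  imports Complex_Main "HOL-Library.Extended_Real"
begin

definition is_spath :: "'a set \<Rightarrow> ('a \<Rightarrow> 'a \<Rightarrow> bool) \<Rightarrow> 'a list \<Rightarrow> bool" where
  "is_spath V adj ps \<longleftrightarrow> ps \<noteq> [] \<and> distinct ps \<and> set ps \<subseteq> V \<and>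
     (\<forall>i. Suc i < length ps \<longrightarrow> adj (ps ! i) (ps ! Suc i))"

definition graph_connected :: "'a set \<Rightarrow> ('a \<Rightarrow> 'a \<Rightarrow> bool) \<Rightarrow> bool" where
  "graph_connected V adj \<longleftrightarrow>
     (\<forall>x\<in>V. \<forall>y\<in>V. \<exists>ps. is_spath V adj ps \<and> hd ps = x \<and> last ps = y)"

definition is_cycle :: "'a set \<Rightarrow> ('a \<Rightarrow> 'a \<Rightarrow> bool) \<Rightarrow> 'a list \<Rightarrow> bool" where
  "is_cycle V adj cs \<longleftrightarrow> 3 \<le> length cs \<and> is_spath V adj cs \<and> adj (last cs) (hd cs)"

definition is_weighted_tree :: "'a set \<Rightarrow> ('a \<Rightarrow> 'a \<Rightarrow> bool) \<Rightarrow> ('a \<Rightarrow> 'a \<Rightarrow> real) \<Rightarrow> bool" where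
  "is_weighted_tree V adj len \<longleftrightarrow>
     finite V \<and> V \<noteq> {} \<and>
     (\<forall>x y. adj x y \<longrightarrow> x \<in> V \<and> y \<in> V) \<and>
     (\<forall>x y. adj x y \<longrightarrow> adj y x) \<and>
     (\<forall>x. \<not> adj x x) \<and>
     (\<forall>x y. adj x y \<longrightarrow> len x y = len y x \<and> 0 < len x y) \<and>
     graph_connected V adj \<and>
     \<not> (\<exists>cs. is_cycle V adj cs)"

definition plen :: "('a \<Rightarrow> 'a \<Rightarrow> real) \<Rightarrow> 'a list \<Rightarrow> real" where
  "plen len ps = (\<Sum>i<length ps - 1. len (ps ! i) (ps ! Suc i))"

definition tdist :: "'a set \<Rightarrow> ('a \<Rightarrow> 'a \<Rightarrow> bool) \<Rightarrow> ('a \<Rightarrow> 'a \<Rightarrow> real) \<Rightarrow> 'a \<Rightarrow> 'a \<Rightarrow> real" where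
  "tdist V adj len x y =
     plen len (THE ps. is_spath V adj ps \<and> hd ps = x \<and> last ps = y)"

definition pdist :: "('a \<Rightarrow> 'a \<Rightarrow> real) \<Rightarrow> 'a list \<Rightarrow> 'a \<Rightarrow> real" where
  "pdist d P v = Min ((\<lambda>p. d p v) ` set P)"

definition proj :: "('a \<Rightarrow> 'a \<Rightarrow> real) \<Rightarrow> 'a list \<Rightarrow> 'a \<Rightarrow> 'a" where
  "proj d P v = (THE p. p \<in> set P \<and> (\<forall>q\<in>set P. q \<noteq> p \<longrightarrow> d p v < d q v))"

definition branch_w :: "'a set \<Rightarrow> ('a \<Rightarrow> 'a \<Rightarrow> real) \<Rightarrow> ('a \<Rightarrow> real) \<Rightarrow> 'a list \<Rightarrow> 'a \<Rightarrow> real" where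
  "branch_w V d w P p = (\<Sum>v\<in>{v\<in>V. proj d P v = p}. w v)"

definition dbar :: "'a set \<Rightarrow> ('a \<Rightarrow> 'a \<Rightarrow> real) \<Rightarrow> ('a \<Rightarrow> real) \<Rightarrow> 'a list \<Rightarrow> 'a \<Rightarrow> real" where
  "dbar V d w P p = (\<Sum>q\<in>set P. branch_w V d w P q * d q p)"

definition weight :: "'a set \<Rightarrow> ('a \<Rightarrow> real) \<Rightarrow> 'a \<Rightarrow> real" where
  "weight V lam v = lam v / (\<Sum>u\<in>V. lam u)"

definition T1 :: "'a set \<Rightarrow> ('a \<Rightarrow> 'a \<Rightarrow> real) \<Rightarrow> ('a \<Rightarrow> real) \<Rightarrow> real \<Rightarrow> 'a list \<Rightarrow> real" where
  "T1 V d w vt P = (1 / vt) * (\<Sum>v\<in>V. w v * pdist d P v)"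

definition T2 :: "'a set \<Rightarrow> ('a \<Rightarrow> 'a \<Rightarrow> real) \<Rightarrow> ('a \<Rightarrow> real) \<Rightarrow> real \<Rightarrow> 'a list \<Rightarrow> real" where
  "T2 V d w vt P = (1 / vt) * (\<Sum>v\<in>V. w v * dbar V d w P (proj d P v))"

definition Sbar :: "'a set \<Rightarrow> ('a \<Rightarrow> 'a \<Rightarrow> real) \<Rightarrow> ('a \<Rightarrow> real) \<Rightarrow> real \<Rightarrow> real \<Rightarrow> 'a list \<Rightarrow> real" where
  "Sbar V d w vt Gb P = T2 V d w vt P + Gb"

definition s_i :: "'a set \<Rightarrow> ('a \<Rightarrow> 'a \<Rightarrow> real) \<Rightarrow> ('a \<Rightarrow> real) \<Rightarrow> real \<Rightarrow> ('a \<Rightarrow> real) \<Rightarrow> 'a list \<Rightarrow> 'a \<Rightarrow> real" where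
  "s_i V d w vt G P v = (1 / vt) * (dbar V d w P (proj d P v) + G v)"

definition S2bar :: "'a set \<Rightarrow> ('a \<Rightarrow> 'a \<Rightarrow> real) \<Rightarrow> ('a \<Rightarrow> real) \<Rightarrow> real \<Rightarrow> ('a \<Rightarrow> real) \<Rightarrow> 'a list \<Rightarrow> real" where
  "S2bar V d w vt G P = (\<Sum>v\<in>V. w v * (s_i V d w vt G P v)\<^sup>2)"

definition Qbar :: "'a set \<Rightarrow> ('a \<Rightarrow> 'a \<Rightarrow> real) \<Rightarrow> ('a \<Rightarrow> real) \<Rightarrow> real \<Rightarrow> real \<Rightarrow> ('a \<Rightarrow> real) \<Rightarrow> real \<Rightarrow> 'a list \<Rightarrow> ereal" where
  "Qbar V d w lt vt G Gb P =
     (if lt * Sbar V d w vt Gb P < 1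
      then ereal (lt * S2bar V d w vt G P / (2 * (1 - lt * Sbar V d w vt Gb P)))
      else \<infinity>)"

end

theory Submission
  imports Defs
begin

text \<open>In a tree every vertex \<open>v\<close> has a gate on a path \<open>P\<close>: the vertex \<open>r\<close> where the
  unique path from \<open>v\<close> first meets \<open>P\<close>, through which every path from \<open>v\<close> to \<open>P\<close> passes, so
  \<open>d v q = d v r + d r q\<close> for all \<open>q\<close> on \<open>P\<close>; hence \<open>r = p\<^sub>P(v)\<close>. Comparing gates on \<open>P\<close> and on
  a longer path \<open>P'\<close> shows that projecting onto the smaller path never increases the distance
  between two projections, \<open>d(p\<^sub>P u, p\<^sub>P v) \<le> d(p\<^sub>P' u, p\<^sub>P' v)\<close>. Since
  \<open>dbar P (p\<^sub>P v) = \<Sum>\<^sub>u w\<^sub>u d(p\<^sub>P u, p\<^sub>P v)\<close>, all of \<open>T\<^sub>2\<close>, \<open>S\<close>, \<open>S\<^sup>2\<close> and \<open>Q\<close> are monotone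
  in the path, while \<open>T\<^sub>1\<close> decreases because a minimum over more vertices is smaller.\<close>

lemma is_spath_iff_successively:
  "is_spath V adj ps \<longleftrightarrow> ps \<noteq> [] \<and> distinct ps \<and> set ps \<subseteq> V \<and> successively adj ps"
  unfolding is_spath_def successively_conv_nth by blast

lemma plen_Cons: "plen len (a # l) = (if l = [] then 0 else len a (hd l) + plen len l)"
proof (cases l)
  case Nil
  then show ?thesis by (simp add: plen_def)
next
  case (Cons b l')
  have "plen len (a # l) = (\<Sum>i<Suc (length l'). len ((a # l) ! i) ((a # l) ! Suc i))"
    by (simp add: plen_def Cons)
  also have "\<dots> = len a b + (\<Sum>i<length l'. len (l ! i) (l ! Suc i))"
    by (subst sum.lessThan_Suc_shift) (simp add: Cons)
  finally show ?thesis by (simp add: plen_def Cons)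
qed

lemma plen_append: "plen len (xs @ z # ys) = plen len (xs @ [z]) + plen len (z # ys)"
proof (induction xs)
  case (Cons a xs)
  have "hd (xs @ z # ys) = hd (xs @ [z])" by (cases xs) auto
  with Cons show ?case by (simp add: plen_Cons)
qed (simp add: plen_Cons)

locale weighted_tree =
  fixes V :: "'a set" and adj :: "'a \<Rightarrow> 'a \<Rightarrow> bool" and len :: "'a \<Rightarrow> 'a \<Rightarrow> real"
  assumes tree: "is_weighted_tree V adj len"
begin

abbreviation spath :: "'a list \<Rightarrow> bool" where "spath \<equiv> is_spath V adj"

abbreviation d :: "'a \<Rightarrow> 'a \<Rightarrow> real" where "d \<equiv> tdist V adj len"

lemma finite_V: "finite V"
  and adj_sym: "adj x y \<Longrightarrow> adj y x"
  and len_sym: "adj x y \<Longrightarrow> len x y = len y x"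
  and len_pos: "adj x y \<Longrightarrow> 0 < len x y"
  and not_cycle: "\<not> is_cycle V adj cs"
  using tree by (auto simp: is_weighted_tree_def)

lemma ex_spath: "x \<in> V \<Longrightarrow> y \<in> V \<Longrightarrow> \<exists>ps. spath ps \<and> hd ps = x \<and> last ps = y"
  using tree by (auto simp: is_weighted_tree_def graph_connected_def)

lemma successively_adj_rev: "successively adj (rev xs) \<longleftrightarrow> successively adj xs"
proof -
  have "successively (\<lambda>x y. adj y x) xs \<longleftrightarrow> successively adj xs"
    by (rule iffI; erule successively_mono; simp add: adj_sym)
  then show ?thesis by simp
qed

lemma spath_rev: "spath ps \<Longrightarrow> spath (rev ps)"
  by (simp add: is_spath_iff_successively successively_adj_rev del: successively_rev)

lemma spath_prefix: "spath (xs @ ys) \<Longrightarrow> xs \<noteq> [] \<Longrightarrow> spath xs"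
  and spath_suffix: "spath (xs @ ys) \<Longrightarrow> ys \<noteq> [] \<Longrightarrow> spath ys"
  by (auto simp: is_spath_iff_successively successively_append_iff)

lemma spath_append:
  "spath (xs @ [z]) \<Longrightarrow> spath (z # ys) \<Longrightarrow> set xs \<inter> set (z # ys) = {} \<Longrightarrow> spath (xs @ z # ys)"
  by (auto simp: is_spath_iff_successively successively_append_iff successively_Cons)

lemma cycle_of_two_spaths:
  assumes A: "spath (x # A @ [z])" and C: "spath (x # C @ [z])"
    and disj: "set A \<inter> set C = {}" and ne: "A \<noteq> [] \<or> C \<noteq> []"
  shows "is_cycle V adj (x # A @ z # rev C)"
proof -
  have rev_C: "successively adj (z # rev C @ [x])"
    using C successively_adj_rev[of "x # C @ [z]"] by (simp add: is_spath_iff_successively)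
  have "successively adj (z # rev C)"
    using rev_C successively_append_iff[of adj "z # rev C" "[x]"] by simp
  then have "successively adj (x # A @ z # rev C)"
    using A successively_append_iff[of adj "x # A" "z # rev C"]
      successively_append_iff[of adj "x # A" "[z]"]
    by (simp add: is_spath_iff_successively)
  moreover have "adj (last (z # rev C)) x"
    using rev_C successively_append_iff[of adj "z # rev C" "[x]"] by auto
  moreover have "distinct (x # A @ z # rev C)" "set (x # A @ z # rev C) \<subseteq> V"
    using A C disj by (auto simp: is_spath_iff_successively)
  moreover have "3 \<le> length (x # A @ z # rev C)"
    using ne by (cases A; cases C) auto
  ultimately show ?thesis
    by (simp add: is_cycle_def is_spath_iff_successively)
qed

lemma no_spath_fork:
  assumes ps: "spath (x # ps)" and qs: "spath (x # qs)" and ne: "ps \<noteq> []" "qs \<noteq> []"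
    and last_eq: "last ps = last qs" and hd_neq: "hd ps \<noteq> hd qs"
  shows False
proof -
  have "\<exists>y\<in>set qs. y \<in> set ps"
    using last_eq ne by (metis last_in_set)
  then obtain C z D where qs_eq: "qs = C @ z # D" and z: "z \<in> set ps"
    and C: "\<forall>y\<in>set C. y \<notin> set ps"
    using split_list_first_prop[of qs "\<lambda>y. y \<in> set ps"] by blast
  obtain A B where ps_eq: "ps = A @ z # B"
    using z by (meson split_list)
  have "spath (x # A @ [z])"
    using spath_prefix[of "x # A @ [z]" B] ps by (simp add: ps_eq)
  moreover have "spath (x # C @ [z])"
    using spath_prefix[of "x # C @ [z]" D] qs by (simp add: qs_eq)
  moreover have "set A \<inter> set C = {}"
    using C by (auto simp: ps_eq)
  moreover have "A \<noteq> [] \<or> C \<noteq> []"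
    using hd_neq by (auto simp: ps_eq qs_eq)
  ultimately show False
    using cycle_of_two_spaths not_cycle by blast
qed

lemma spath_unique:
  "spath ps \<Longrightarrow> spath qs \<Longrightarrow> hd ps = hd qs \<Longrightarrow> last ps = last qs \<Longrightarrow> ps = qs"
proof (induction ps arbitrary: qs)
  case Nil
  then show ?case by (simp add: is_spath_iff_successively)
next
  case (Cons x ps)
  obtain qs' where qs: "qs = x # qs'"
    using Cons.prems by (cases qs) (auto simp: is_spath_iff_successively)
  show ?case
  proof (cases "ps = [] \<or> qs' = []")
    case True
    then show ?thesis
      using Cons.prems unfolding qs is_spath_iff_successively
      by (metis distinct.simps(2) last.simps last_in_set)
  next
    case False
    then have ne: "ps \<noteq> []" "qs' \<noteq> []" and last_eq: "last ps = last qs'"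
      using Cons.prems qs by auto
    have "hd ps = hd qs'"
      using no_spath_fork[of x ps qs'] Cons.prems(1,2) qs ne last_eq by blast
    moreover have "spath ps" "spath qs'"
      using spath_suffix[of "[x]" ps] spath_suffix[of "[x]" qs'] Cons.prems(1,2) ne qs by simp_all
    ultimately have "ps = qs'"
      using Cons.IH[of qs'] last_eq by blast
    then show ?thesis
      using qs by simp
  qed
qed

lemma tdist_spath: "spath ps \<Longrightarrow> d (hd ps) (last ps) = plen len ps"
  unfolding tdist_def
  by (rule arg_cong[where f = "plen len"], rule the_equality) (auto intro: spath_unique)

lemma plen_nonneg: "successively adj ps \<Longrightarrow> 0 \<le> plen len ps"
proof (induction ps rule: induct_list012)
  case (3 a b ps)
  then show ?case
    using len_pos[of a b] by (simp add: plen_Cons)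
qed (simp_all add: plen_def)

lemma plen_rev: "successively adj ps \<Longrightarrow> plen len (rev ps) = plen len ps"
proof (induction ps rule: induct_list012)
  case (3 a b ps)
  have "plen len (rev (a # b # ps)) = plen len (rev (b # ps)) + len b a"
    by (simp add: plen_append[of len "rev ps" b "[a]", simplified] plen_Cons)
  also have "\<dots> = plen len (a # b # ps)"
    using 3 len_sym[of a b] by (simp add: plen_Cons)
  finally show ?case .
qed simp_all

lemma tdist_sym: assumes "x \<in> V" "y \<in> V" shows "d x y = d y x"
proof -
  obtain ps where ps: "spath ps" "hd ps = x" "last ps = y"
    using ex_spath assms by blast
  have "d y x = plen len (rev ps)"
    using tdist_spath[OF spath_rev[OF ps(1)]] ps by (simp add: is_spath_iff_successively hd_rev last_rev)
  also have "\<dots> = plen len ps"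
    using ps(1) plen_rev by (simp add: is_spath_iff_successively)
  finally show ?thesis
    using tdist_spath[OF ps(1)] ps by simp
qed

lemma tdist_nonneg: assumes "x \<in> V" "y \<in> V" shows "0 \<le> d x y"
proof -
  obtain ps where ps: "spath ps" "hd ps = x" "last ps = y"
    using ex_spath assms by blast
  then have "0 \<le> plen len ps"
    using plen_nonneg by (simp add: is_spath_iff_successively)
  then show ?thesis
    using tdist_spath[OF ps(1)] ps by simp
qed

lemma tdist_pos: assumes "x \<in> V" "y \<in> V" "x \<noteq> y" shows "0 < d x y"
proof -
  obtain ps where ps: "spath ps" "hd ps = x" "last ps = y"
    using ex_spath assms by blast
  then obtain b ps' where ps_eq: "ps = x # b # ps'"
    using assms(3) by (cases ps; cases "tl ps") (auto simp: is_spath_iff_successively)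
  have "0 < len x b" "0 \<le> plen len (b # ps')"
    using ps(1) len_pos plen_nonneg by (auto simp: is_spath_iff_successively ps_eq)
  then have "0 < plen len ps"
    by (simp add: ps_eq plen_Cons[of len x])
  then show ?thesis
    using tdist_spath[OF ps(1)] ps by simp
qed

lemma tdist_split:
  assumes "spath ps" "z \<in> set ps"
  shows "d (hd ps) (last ps) = d (hd ps) z + d z (last ps)"
proof -
  obtain A B where ps: "ps = A @ z # B"
    using assms(2) by (meson split_list)
  have "spath (A @ [z])" "spath (z # B)"
    using spath_prefix[of "A @ [z]" B] spath_suffix[of A "z # B"] assms(1) ps by simp_all
  moreover have "hd (A @ [z]) = hd ps"
    by (cases A) (simp_all add: ps)
  ultimately have "d (hd ps) z = plen len (A @ [z])" "d z (last ps) = plen len (z # B)"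
    using tdist_spath[of "A @ [z]"] tdist_spath[of "z # B"] by (simp_all add: ps)
  then show ?thesis
    using tdist_spath[OF assms(1)] plen_append[of len A z B] by (simp add: ps)
qed


lemma spath_between_forward:
  assumes P: "spath (A @ a # B)" and b: "b \<in> set (a # B)"
  shows "\<exists>E. spath E \<and> hd E = a \<and> last E = b \<and> set E \<subseteq> set (A @ a # B)"
proof -
  obtain C D where CD: "a # B = C @ b # D"
    using b by (meson split_list)
  have "spath (C @ [b])"
    using spath_suffix[of A "a # B"] spath_prefix[of "C @ [b]" D] P CD by simp
  moreover have "hd (C @ [b]) = a"
    using CD by (cases C) simp_all
  moreover have "set (C @ [b]) \<subseteq> set (a # B)"
    by (simp only: CD) auto
  ultimately show ?thesis
    by (intro exI[of _ "C @ [b]"]) auto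
qed

lemma spath_between:
  assumes P: "spath P" and a: "a \<in> set P" and b: "b \<in> set P"
  shows "\<exists>E. spath E \<and> hd E = a \<and> last E = b \<and> set E \<subseteq> set P"
proof -
  obtain A B where P_eq: "P = A @ a # B"
    using a by (meson split_list)
  show ?thesis
  proof (cases "b \<in> set (a # B)")
    case True
    then show ?thesis
      using spath_between_forward P P_eq by blast
  next
    case False
    then have "b \<in> set (a # rev A)"
      using b P_eq by auto
    moreover have "spath (rev B @ a # rev A)"
      using spath_rev[OF P] P_eq by simp
    moreover have "set (rev B @ a # rev A) = set P"
      using P_eq by auto
    ultimately show ?thesis
      using spath_between_forward[of "rev B" a "rev A" b] by metis
  qed
qed

text \<open>The gate is the first vertex of \<open>P\<close> on a path from \<open>v\<close> to \<open>hd P\<close>; prolonging that path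
  inside \<open>P\<close> to any \<open>q\<close> stays simple, so its length splits at the gate.\<close>
lemma ex_gate:
  assumes P: "spath P" and v: "v \<in> V"
  shows "\<exists>r\<in>set P. \<forall>q\<in>set P. d v q = d v r + d r q"
proof -
  have P_ne: "P \<noteq> []" and "hd P \<in> V"
    using P by (auto simp: is_spath_iff_successively)
  then obtain W where W: "spath W" "hd W = v" "last W = hd P"
    using ex_spath v by blast
  then have "\<exists>y\<in>set W. y \<in> set P"
    using P_ne by (metis hd_in_set is_spath_def last_in_set)
  then obtain C r D where W_eq: "W = C @ r # D" and r: "r \<in> set P"
    and C: "\<forall>y\<in>set C. y \<notin> set P"
    using split_list_first_prop[of W "\<lambda>y. y \<in> set P"] by blast
  have C_path: "spath (C @ [r])"
    using spath_prefix[of "C @ [r]" D] W(1) W_eq by simp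
  have C_hd: "hd (C @ r # E) = v" for E
    using W(2) W_eq by (cases C) simp_all
  show ?thesis
  proof (intro bexI[OF _ r] ballI)
    fix q
    assume q: "q \<in> set P"
    obtain E where E: "spath E" "hd E = r" "last E = q" "set E \<subseteq> set P"
      using spath_between[OF P r q] by blast
    then have E_eq: "E = r # tl E"
      by (metis is_spath_def list.collapse)
    have "spath (C @ r # tl E)"
      using spath_append[OF C_path] E E_eq C by (metis disjoint_iff subsetD)
    moreover have "last (C @ r # tl E) = q"
      using E(3) E_eq by (metis last_appendR list.distinct(1))
    ultimately show "d v q = d v r + d r q"
      using tdist_split[of "C @ r # tl E" r] C_hd by simp
  qed
qed

lemma proj_eqI:
  assumes P: "spath P" and v: "v \<in> V" and r: "r \<in> set P"
    and gate: "\<forall>q\<in>set P. d v q = d v r + d r q"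
  shows "proj d P v = r"
proof -
  have PV: "set P \<subseteq> V"
    using P by (simp add: is_spath_iff_successively)
  have closer: "d r v < d q v" if q: "q \<in> set P" "q \<noteq> r" for q
  proof -
    have qV: "q \<in> V" and rV: "r \<in> V"
      using PV q r by auto
    have "d v q = d v r + d r q"
      using gate q(1) by blast
    then show ?thesis
      using tdist_pos[OF rV qV not_sym[OF q(2)]] tdist_sym[OF v qV] tdist_sym[OF v rV] by linarith
  qed
  show ?thesis
    unfolding proj_def
  proof (rule the_equality)
    show "r \<in> set P \<and> (\<forall>q\<in>set P. q \<noteq> r \<longrightarrow> d r v < d q v)"
      using r closer by blast
  next
    fix p
    assume "p \<in> set P \<and> (\<forall>q\<in>set P. q \<noteq> p \<longrightarrow> d p v < d q v)"
    then show "p = r"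
      using r closer by force
  qed
qed

lemma proj_gate:
  assumes P: "spath P" and v: "v \<in> V"
  shows "proj d P v \<in> set P"
    and "q \<in> set P \<Longrightarrow> d v q = d v (proj d P v) + d (proj d P v) q"
proof -
  obtain r where r: "r \<in> set P" and gate: "\<forall>q\<in>set P. d v q = d v r + d r q"
    using ex_gate[OF P v] by blast
  have "proj d P v = r"
    using proj_eqI[OF P v r gate] .
  then show "proj d P v \<in> set P"
    and "q \<in> set P \<Longrightarrow> d v q = d v (proj d P v) + d (proj d P v) q"
    using r gate by blast+
qed

lemma tdist_triangle:
  assumes x: "x \<in> V" and y: "y \<in> V" and z: "z \<in> V"
  shows "d x z \<le> d x y + d y z"
proof -
  obtain ps where ps: "spath ps" "hd ps = y" "last ps = z"
    using ex_spath y z by blast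
  define r where "r = proj d ps x"
  have r: "r \<in> set ps" and rV: "r \<in> V"
    using proj_gate(1)[OF ps(1) x] ps(1) by (auto simp: r_def is_spath_iff_successively)
  have "y \<in> set ps" "z \<in> set ps"
    using ps by (auto simp: is_spath_iff_successively)
  then have "d x z = d x r + d r z" "d x y = d x r + d r y"
    using proj_gate(2)[OF ps(1) x, folded r_def] by blast+
  moreover have "d y z = d y r + d r z"
    using tdist_split[OF ps(1) r] ps by simp
  ultimately show ?thesis
    using tdist_nonneg[OF rV y] tdist_nonneg[OF y rV] by linarith
qed

text \<open>With \<open>a, b\<close> the projections onto \<open>P\<close> and \<open>x, y\<close> those onto \<open>P'\<close>, the gate
  property on both paths gives \<open>d a b = d x b - d x a\<close> and \<open>d b a = d y a - d y b\<close>; adding and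
  applying the triangle inequality twice bounds \<open>2 d a b\<close> by \<open>2 d x y\<close>.\<close>
lemma tdist_proj_le_tdist_proj_superpath:
  assumes P: "spath P" and P': "spath P'" and sub: "set P \<subseteq> set P'"
    and u: "u \<in> V" and v: "v \<in> V"
  shows "d (proj d P u) (proj d P v) \<le> d (proj d P' u) (proj d P' v)"
proof -
  define a b x y where "a = proj d P u" and "b = proj d P v"
    and "x = proj d P' u" and "y = proj d P' v"
  have ab: "a \<in> set P" "b \<in> set P"
    using proj_gate(1)[OF P] u v by (simp_all add: a_def b_def)
  have "x \<in> set P'" "y \<in> set P'"
    using proj_gate(1)[OF P'] u v by (simp_all add: x_def y_def)
  then have V4: "a \<in> V" "b \<in> V" "x \<in> V" "y \<in> V"
    using ab sub P' by (auto simp: is_spath_iff_successively)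
  have "d u b = d u a + d a b" "d v a = d v b + d b a"
    using proj_gate(2)[OF P u ab(2), folded a_def] proj_gate(2)[OF P v ab(1), folded b_def] .
  moreover have "d u b = d u x + d x b" "d u a = d u x + d x a"
    "d v a = d v y + d y a" "d v b = d v y + d y b"
    using proj_gate(2)[OF P' u, folded x_def] proj_gate(2)[OF P' v, folded y_def] ab sub
    by blast+
  moreover have "d x b \<le> d x y + d y b" "d y a \<le> d y x + d x a"
    using tdist_triangle V4 by blast+
  moreover have "d b a = d a b" "d y x = d x y"
    using tdist_sym V4 by blast+
  ultimately have "d a b \<le> d x y"
    by linarith
  then show ?thesis
    by (simp only: a_def b_def x_def y_def)
qed


end

lemma dbar_eq_sum_proj:
  assumes "finite V" and "proj d P ` V \<subseteq> set P"
  shows "dbar V d w P p = (\<Sum>u\<in>V. w u * d (proj d P u) p)"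
proof -
  have "dbar V d w P p = (\<Sum>q\<in>set P. \<Sum>u\<in>{u\<in>V. proj d P u = q}. w u * d (proj d P u) p)"
    unfolding dbar_def branch_w_def sum_distrib_right by (intro sum.cong refl) auto
  also have "\<dots> = (\<Sum>u\<in>V. w u * d (proj d P u) p)"
    using sum.group[OF assms(1) finite_set assms(2)] .
  finally show ?thesis .
qed

lemma T1_antimono:
  assumes "0 < vt" and "\<And>v. v \<in> V \<Longrightarrow> 0 \<le> w v" and "P \<noteq> []" and "set P \<subseteq> set P'"
  shows "T1 V d w vt P' \<le> T1 V d w vt P"
proof -
  have "pdist d P' v \<le> pdist d P v" for v
    unfolding pdist_def by (rule Min_antimono) (use assms(3,4) in auto)
  then show ?thesis
    unfolding T1_def using assms(1,2) by (intro mult_left_mono sum_mono) auto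
qed

lemma T2_mono:
  assumes "0 < vt" and "\<And>v. v \<in> V \<Longrightarrow> 0 \<le> w v"
    and "\<And>v. v \<in> V \<Longrightarrow> dbar V d w P (proj d P v) \<le> dbar V d w P' (proj d P' v)"
  shows "T2 V d w vt P \<le> T2 V d w vt P'"
  unfolding T2_def using assms by (intro mult_left_mono sum_mono) auto

lemma S2bar_mono:
  assumes "0 < vt" and "\<And>v. v \<in> V \<Longrightarrow> 0 \<le> w v" and "\<And>v. v \<in> V \<Longrightarrow> 0 \<le> G v"
    and "\<And>v. v \<in> V \<Longrightarrow> 0 \<le> dbar V d w P (proj d P v)"
    and "\<And>v. v \<in> V \<Longrightarrow> dbar V d w P (proj d P v) \<le> dbar V d w P' (proj d P' v)"
  shows "S2bar V d w vt G P \<le> S2bar V d w vt G P'"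
proof -
  have "0 \<le> s_i V d w vt G P v" "s_i V d w vt G P v \<le> s_i V d w vt G P' v" if "v \<in> V" for v
    unfolding s_i_def using assms that by (auto intro!: divide_right_mono)
  then show ?thesis
    unfolding S2bar_def using assms(2) by (intro sum_mono mult_left_mono power_mono) auto
qed

lemma Qbar_mono:
  assumes "0 \<le> lt" and S: "Sbar V d w vt Gb P \<le> Sbar V d w vt Gb P'"
    and "0 \<le> S2bar V d w vt G P" and "S2bar V d w vt G P \<le> S2bar V d w vt G P'"
  shows "Qbar V d w lt vt G Gb P \<le> Qbar V d w lt vt G Gb P'"
proof (cases "lt * Sbar V d w vt Gb P' < 1")
  case True
  have "lt * Sbar V d w vt Gb P \<le> lt * Sbar V d w vt Gb P'"
    using S assms(1) by (rule mult_left_mono)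
  with True assms show ?thesis
    unfolding Qbar_def by (auto intro!: frac_le mult_left_mono)
next
  case False
  then show ?thesis
    unfolding Qbar_def by simp
qed

context weighted_tree
begin

lemma dbar_spath_eq:
  "spath P \<Longrightarrow> dbar V d w P p = (\<Sum>u\<in>V. w u * d (proj d P u) p)"
  using dbar_eq_sum_proj[OF finite_V] proj_gate(1) by blast

lemma dbar_proj_nonneg:
  assumes P: "spath P" and w: "\<And>u. u \<in> V \<Longrightarrow> 0 \<le> w u" and v: "v \<in> V"
  shows "0 \<le> dbar V d w P (proj d P v)"
proof -
  have "proj d P u \<in> V" if "u \<in> V" for u
    using proj_gate(1)[OF P that] P by (auto simp: is_spath_iff_successively)
  then show ?thesis
    unfolding dbar_spath_eq[OF P] using w v by (intro sum_nonneg mult_nonneg_nonneg tdist_nonneg) auto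
qed

lemma dbar_proj_mono_superpath:
  assumes P: "spath P" and P': "spath P'" and "set P \<subseteq> set P'"
    and "\<And>u. u \<in> V \<Longrightarrow> 0 \<le> w u" and "v \<in> V"
  shows "dbar V d w P (proj d P v) \<le> dbar V d w P' (proj d P' v)"
  unfolding dbar_spath_eq[OF P] dbar_spath_eq[OF P'] using assms
  by (intro sum_mono mult_left_mono tdist_proj_le_tdist_proj_superpath) auto

end

theorem corollary2:
  fixes V :: "'a set" and adj :: "'a \<Rightarrow> 'a \<Rightarrow> bool" and len :: "'a \<Rightarrow> 'a \<Rightarrow> real"
    and lam :: "'a \<Rightarrow> real" and G :: "'a \<Rightarrow> real" and Gb :: real and vt :: real
    and P P' :: "'a list"
  assumes tree: "is_weighted_tree V adj len"
    and lam_nonneg: "\<forall>v\<in>V. 0 \<le> lam v"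
    and lam_pos: "0 < (\<Sum>v\<in>V. lam v)"
    and vt_pos: "0 < vt"
    and G_nonneg: "\<forall>v\<in>V. 0 \<le> G v"
    and Gb_nonneg: "0 \<le> Gb"
    and P_path: "is_spath V adj P"
    and P'_path: "is_spath V adj P'"
    and sub: "set P \<subseteq> set P'"
  shows "T1 V (tdist V adj len) (weight V lam) vt P' \<le> T1 V (tdist V adj len) (weight V lam) vt P
       \<and> T2 V (tdist V adj len) (weight V lam) vt P \<le> T2 V (tdist V adj len) (weight V lam) vt P'
       \<and> Sbar V (tdist V adj len) (weight V lam) vt Gb P \<le> Sbar V (tdist V adj len) (weight V lam) vt Gb P'
       \<and> S2bar V (tdist V adj len) (weight V lam) vt G P \<le> S2bar V (tdist V adj len) (weight V lam) vt G P'
       \<and> Qbar V (tdist V adj len) (weight V lam) (\<Sum>v\<in>V. lam v) vt G Gb P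
           \<le> Qbar V (tdist V adj len) (weight V lam) (\<Sum>v\<in>V. lam v) vt G Gb P'"
proof -
  interpret weighted_tree V adj len
    by (rule weighted_tree.intro[OF tree])
  define w where "w = weight V lam"
  have w_nonneg: "0 \<le> w v" if "v \<in> V" for v
    unfolding w_def weight_def using lam_nonneg lam_pos that by simp
  note dbar_mono = dbar_proj_mono_superpath[where w = w, OF P_path P'_path sub w_nonneg]
  have T1: "T1 V d w vt P' \<le> T1 V d w vt P"
    using T1_antimono[where w = w, OF vt_pos w_nonneg] P_path sub by (auto simp: is_spath_def)
  have T2: "T2 V d w vt P \<le> T2 V d w vt P'"
    using T2_mono[where w = w, OF vt_pos w_nonneg dbar_mono] .
  then have S: "Sbar V d w vt Gb P \<le> Sbar V d w vt Gb P'"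
    by (simp add: Sbar_def)
  have S2: "S2bar V d w vt G P \<le> S2bar V d w vt G P'"
    using S2bar_mono[where w = w, OF vt_pos w_nonneg _ dbar_proj_nonneg[OF P_path w_nonneg] dbar_mono]
      G_nonneg by blast
  have S2_nonneg: "0 \<le> S2bar V d w vt G P"
    unfolding S2bar_def using w_nonneg by (simp add: sum_nonneg)
  have "Qbar V d w (\<Sum>v\<in>V. lam v) vt G Gb P \<le> Qbar V d w (\<Sum>v\<in>V. lam v) vt G Gb P'"
    using lam_pos by (intro Qbar_mono S S2 S2_nonneg) simp
  with T1 T2 S S2 show ?thesis
    unfolding w_def by blast
qed

end
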